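(* Coefficientwise modulo $64$, $$\frac{f_2^8}{f_1^{16}}\equiv 21+12\varphi(-q)^2+16\varphi(q^2)+16\varphi(q^4)\pmod{64}.$$
   Context: For a positive integer $k$ let $f_k:=\prod_{m=1}^\infty(1-q^{mk})$, as a formal power series in $q$. Let $\varphi(q):=\sum_{n=-\infty}^{\infty}q^{n^2}$ (Ramanujan's theta function). Congruences between integer power series are meant coefficientwise. *)

theory Defs
  imports "HOL-Computational_Algebra.Formal_Power_Series"
begin

text \<open>f_k = prod_{m>=1} (1 - q^{mk}) as a formal power series (over the rationals, so
that quotients of series with constant term 1 are available via the library inverse).
The n-th coefficient of the infinite product equals that of the finite product over
m = 1..n, since factors with m > n (k >= 1) do not affect it.\<close>
definition eta_f :: "nat \<Rightarrow> rat fps" where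
  "eta_f k = Abs_fps (\<lambda>n. fps_nth (\<Prod>m\<in>{1..n}. (1 - fps_X ^ (m * k))) n)"

text \<open>Ramanujan's theta function phi(q) = sum_{n in Z} q^{n^2}: the coefficient of q^m is
the number of integers n with n^2 = m.\<close>
definition ramanujan_phi :: "rat fps" where
  "ramanujan_phi = Abs_fps (\<lambda>m. of_nat (card {n::int. n ^ 2 = int m}))"

end

theory Submission
  imports Defs
begin

(*
  Gauss's identity phi(-q) = f_1^2 / f_2 turns f_2^8 / f_1^16 into 1 / phi(-q)^8.  Since
  phi(q) = 1 + 2 s(q) with s(q) = sum_{n >= 1} q^(n^2), write phi(-q) = 1 + 2 x; then
  w = 1 - 16 x + 16 x^2 + 32 x^4 inverts (1 + 2 x)^8 modulo 64.  Only 32 x^2 and 32 x^4 have to be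
  matched modulo 64, i.e. x^2 and x^4 modulo 2; there x is congruent to s, and squaring an integer
  series is congruent to substituting q^2 for q, so x^2 and x^4 are congruent to s(q^2) and s(q^4),
  which are (phi(q^2) - 1)/2 and (phi(q^4) - 1)/2.

  Gauss's identity itself is proved by Gauss's method: the finite q-binomial theorem applied to
  prod_{j<2n} (q^(2n-1) - q^(2j)) writes (q;q^2)_n^2 as an alternating sum of Gaussian binomials
  [2n, k] in q^2 times q^((k-n)^2), and each [2n, k] f_2 is 1 up to order 2 min(k, 2n-k) + 2.
*)

unbundle fps_syntax

definition ring_cong :: "'a::comm_ring_1 \<Rightarrow> 'a \<Rightarrow> 'a \<Rightarrow> bool" where
  "ring_cong m a b \<longleftrightarrow> m dvd a - b"

lemma ring_cong_refl [simp]: "ring_cong m a a"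
  by (simp add: ring_cong_def)

lemma ring_cong_sym: "ring_cong m a b \<Longrightarrow> ring_cong m b a"
  unfolding ring_cong_def by (subst minus_diff_eq[symmetric]) (simp only: dvd_minus_iff)

lemma ring_cong_trans [trans]:
  assumes "ring_cong m a b" "ring_cong m b c"
  shows "ring_cong m a c"
proof -
  have "a - c = (a - b) + (b - c)" by simp
  with assms show ?thesis unfolding ring_cong_def by (metis dvd_add)
qed

lemma ring_cong_add: "ring_cong m a b \<Longrightarrow> ring_cong m c d \<Longrightarrow> ring_cong m (a + c) (b + d)"
  unfolding ring_cong_def by (simp add: add_diff_add)

lemma ring_cong_mult:
  assumes "ring_cong m a b" "ring_cong m c d"
  shows "ring_cong m (a * c) (b * d)"
proof -
  have "a * c - b * d = (a - b) * c + b * (c - d)" by (simp add: algebra_simps)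
  with assms show ?thesis unfolding ring_cong_def by simp
qed

lemma ring_cong_power: "ring_cong m a b \<Longrightarrow> ring_cong m (a ^ n) (b ^ n)"
  by (induction n) (simp_all add: ring_cong_mult)

lemma ring_cong_sum:
  "(\<And>i. i \<in> S \<Longrightarrow> ring_cong m (f i) (g i)) \<Longrightarrow> ring_cong m (sum f S) (sum g S)"
  by (induction S rule: infinite_finite_induct) (simp_all add: ring_cong_add)

lemma ring_cong_dvd: "ring_cong m a b \<Longrightarrow> k dvd m \<Longrightarrow> ring_cong k a b"
  unfolding ring_cong_def using dvd_trans by blast

lemma ring_cong_mult_left: "ring_cong m a b \<Longrightarrow> ring_cong (k * m) (k * a) (k * b)"
  unfolding ring_cong_def by (simp add: mult_dvd_mono flip: right_diff_distrib)

lemma ring_cong_cancel: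
  assumes "ring_cong m (a * e) (b * e)" "e * v = 1"
  shows "ring_cong m a b"
proof -
  have "ring_cong m (a * e * v) (b * e * v)" using assms(1) by (rule ring_cong_mult) simp
  with assms(2) show ?thesis by (simp add: mult.assoc)
qed

lemma ring_cong_one_minus: "m dvd a \<Longrightarrow> ring_cong m (1 - a) 1"
  by (simp add: ring_cong_def)

lemma ring_cong_fps_X_power_iff:
  "ring_cong (fps_X ^ n) f g \<longleftrightarrow> (\<forall>k<n. f $ k = (g :: 'a::comm_ring_1 fps) $ k)"
proof
  assume "ring_cong (fps_X ^ n) f g"
  then obtain c where c: "f - g = fps_X ^ n * c" unfolding ring_cong_def by (elim dvdE)
  show "\<forall>k<n. f $ k = g $ k"
  proof (intro allI impI)
    fix k assume "k < n"
    then have "(f - g) $ k = 0" by (simp add: c fps_X_power_mult_nth)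
    then show "f $ k = g $ k" by simp
  qed
next
  assume fg: "\<forall>k<n. f $ k = g $ k"
  have "f - g = fps_X ^ n * Abs_fps (\<lambda>k. (f - g) $ (k + n))"
    by (rule fps_ext) (simp add: fps_X_power_mult_nth fg)
  then show "ring_cong (fps_X ^ n) f g" unfolding ring_cong_def by (rule dvdI)
qed

lemma ring_cong_fps_const_iff:
  "ring_cong (fps_const c) f g \<longleftrightarrow> (\<forall>k. c dvd f $ k - (g :: 'a::comm_ring_1 fps) $ k)"
proof
  assume "ring_cong (fps_const c) f g"
  then obtain h where h: "f - g = fps_const c * h" unfolding ring_cong_def by (elim dvdE)
  show "\<forall>k. c dvd f $ k - g $ k"
  proof
    fix k
    have "f $ k - g $ k = c * h $ k" using arg_cong[OF h, of "\<lambda>p. p $ k"] by simp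
    then show "c dvd f $ k - g $ k" by simp
  qed
next
  assume "\<forall>k. c dvd f $ k - g $ k"
  then obtain d where d: "\<forall>k. f $ k - g $ k = c * d k"
    by (auto simp: dvd_def dest!: choice)
  have "f - g = fps_const c * Abs_fps d" by (rule fps_ext) (simp add: d)
  then show "ring_cong (fps_const c) f g" unfolding ring_cong_def by (rule dvdI)
qed

lemma ring_cong_numeral_fps_iff:
  "ring_cong (numeral k) f g \<longleftrightarrow> (\<forall>n. numeral k dvd f $ n - (g :: 'a::comm_ring_1 fps) $ n)"
  by (simp add: numeral_fps_const ring_cong_fps_const_iff)

lemma fps_X_power_mult_cancel:
  assumes "fps_X ^ k * f = fps_X ^ k * (g :: 'a::comm_ring_1 fps)"
  shows "f = g"
proof (rule fps_ext)
  fix n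
  have "(fps_X ^ k * f) $ (n + k) = (fps_X ^ k * g) $ (n + k)" by (simp only: assms)
  then show "f $ n = g $ n" by (simp add: fps_X_power_mult_nth)
qed

lemma fps_minus_one_power_mult_nth:
  "((-1) ^ j * f) $ i = (-1) ^ j * (f :: 'a::comm_ring_1 fps) $ i"
  by (induction j) simp_all

lemma fps_compose_X_power_nth:
  assumes "0 < k"
  shows "(f oo fps_X ^ k) $ n = (if k dvd n then f $ (n div k) else (0 :: 'a::comm_ring_1))"
proof -
  have "(f oo fps_X ^ k) $ n = (\<Sum>i = 0..n. if i = n div k \<and> k dvd n then f $ (n div k) else 0)"
    unfolding fps_compose_nth using assms
    by (intro sum.cong) (auto simp flip: power_mult)
  also have "\<dots> = (if k dvd n then f $ (n div k) else 0)"
    by (simp add: sum.delta)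
  finally show ?thesis .
qed

lemma fps_compose_one_plus_two_mult:
  "g $ 0 = 0 \<Longrightarrow> (1 + 2 * s) oo g = 1 + 2 * (s oo (g :: 'a::idom fps))"
  by (simp add: fps_compose_add_distrib fps_compose_mult_distrib)

section \<open>The finite q-binomial theorem\<close>

definition q_pochhammer :: "'a::comm_ring_1 \<Rightarrow> nat \<Rightarrow> 'a" where
  "q_pochhammer q n = (\<Prod>j\<in>{1..n}. 1 - q ^ j)"

lemma q_pochhammer_0 [simp]: "q_pochhammer q 0 = 1"
  by (simp add: q_pochhammer_def)

lemma q_pochhammer_Suc: "q_pochhammer q (Suc n) = q_pochhammer q n * (1 - q ^ Suc n)"
  by (simp add: q_pochhammer_def)

fun q_binomial :: "'a::comm_ring_1 \<Rightarrow> nat \<Rightarrow> nat \<Rightarrow> 'a" where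
  "q_binomial q 0 k = (if k = 0 then 1 else 0)"
| "q_binomial q (Suc n) 0 = 1"
| "q_binomial q (Suc n) (Suc k) = q_binomial q n (Suc k) + q ^ (n - k) * q_binomial q n k"

lemma q_binomial_0_right [simp]: "q_binomial q n 0 = 1"
  by (cases n) simp_all

lemma q_binomial_eq_0: "n < k \<Longrightarrow> q_binomial q n k = 0"
  by (induction q n k rule: q_binomial.induct) simp_all

lemma q_binomial_diag [simp]: "q_binomial q n n = 1"
  by (induction n) (simp_all add: q_binomial_eq_0)

lemma q_binomial_mult_q_pochhammer:
  "k \<le> n \<Longrightarrow> q_binomial q n k * q_pochhammer q k * q_pochhammer q (n - k) = q_pochhammer q n"
proof (induction n arbitrary: k)
  case (Suc n)
  show ?case
  proof (cases k)
    case (Suc j)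
    show ?thesis
    proof (cases "j = n")
      case False
      with Suc Suc.prems have "j < n" by simp
      then have nj: "n - j = Suc (n - Suc j)" by simp
      have IH1: "q_binomial q n (Suc j) * q_pochhammer q (Suc j) * q_pochhammer q (n - Suc j)
          = q_pochhammer q n"
        using Suc.IH[of "Suc j"] \<open>j < n\<close> by simp
      have IH2: "q_binomial q n j * q_pochhammer q j * q_pochhammer q (n - j) = q_pochhammer q n"
        using Suc.IH[of j] \<open>j < n\<close> by simp
      have "q_binomial q (Suc n) k * q_pochhammer q k * q_pochhammer q (Suc n - k)
          = q_binomial q n (Suc j) * q_pochhammer q (Suc j) * q_pochhammer q (n - Suc j)
              * (1 - q ^ (n - j))
            + q ^ (n - j) * (q_binomial q n j * q_pochhammer q j * q_pochhammer q (n - j))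
              * (1 - q ^ Suc j)"
        by (simp add: Suc nj q_pochhammer_Suc algebra_simps)
      also have "\<dots> = q_pochhammer q n * (1 - q ^ (n - j) * q ^ Suc j)"
        by (simp only: IH1 IH2) (simp add: algebra_simps)
      also have "q ^ (n - j) * q ^ Suc j = q ^ Suc n"
        using \<open>j < n\<close> by (simp only: power_add[symmetric]) simp
      finally show ?thesis by (simp add: q_pochhammer_Suc)
    qed (simp add: Suc q_binomial_eq_0)
  qed simp
qed simp

lemma q_binomial_theorem:
  fixes a b q :: "'a::comm_ring_1"
  shows "(\<Prod>j<n. a + b * q ^ j)
       = (\<Sum>k\<le>n. q_binomial q n k * q ^ (k choose 2) * a ^ (n - k) * b ^ k)"
proof (induction n)
  case (Suc n)
  define t where "t k = q_binomial q n k * q ^ (k choose 2) * a ^ (n - k) * b ^ k" for k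
  have upper: "a ^ Suc n
      + (\<Sum>k\<le>n. q_binomial q n (Suc k) * q ^ (Suc k choose 2) * a ^ (n - k) * b ^ Suc k)
      = (\<Sum>k\<le>n. a * t k)"
  proof -
    have "(\<Sum>k\<le>Suc n. q_binomial q n k * q ^ (k choose 2) * a ^ (Suc n - k) * b ^ k)
        = (\<Sum>k\<le>n. a * t k)"
      by (simp add: t_def q_binomial_eq_0 Suc_diff_le mult_ac)
    then show ?thesis by (simp add: sum.atMost_Suc_shift binomial_eq_0 del: sum.atMost_Suc)
  qed
  have lower:
    "(\<Sum>k\<le>n. q ^ (n - k) * q_binomial q n k * q ^ (Suc k choose 2) * a ^ (n - k) * b ^ Suc k)
      = (\<Sum>k\<le>n. b * q ^ n * t k)"
  proof (rule sum.cong)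
    fix k assume "k \<in> {..n}"
    then have "n - k + (Suc k choose 2) = n + (k choose 2)"
      by (simp add: numeral_2_eq_2)
    then have "q ^ (n - k) * q ^ (Suc k choose 2) = q ^ n * q ^ (k choose 2)"
      by (metis power_add)
    then show "q ^ (n - k) * q_binomial q n k * q ^ (Suc k choose 2) * a ^ (n - k) * b ^ Suc k
        = b * q ^ n * t k"
      by (simp add: t_def) (simp add: mult_ac)
  qed simp
  have "(\<Sum>k\<le>Suc n. q_binomial q (Suc n) k * q ^ (k choose 2) * a ^ (Suc n - k) * b ^ k)
      = a ^ Suc n
        + (\<Sum>k\<le>n. q_binomial q n (Suc k) * q ^ (Suc k choose 2) * a ^ (n - k) * b ^ Suc k)
        + (\<Sum>k\<le>n. q ^ (n - k) * q_binomial q n k * q ^ (Suc k choose 2) * a ^ (n - k) * b ^ Suc k)"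
    by (simp add: sum.atMost_Suc_shift algebra_simps sum.distrib binomial_eq_0 del: sum.atMost_Suc)
  also have "\<dots> = (a + b * q ^ n) * (\<Sum>k\<le>n. t k)"
    unfolding upper lower by (simp add: sum_distrib_left algebra_simps)
  finally show ?case by (simp add: Suc.IH t_def mult.commute)
qed (simp add: binomial_eq_0)

section \<open>Gauss's identity\<close>

definition odd_pochhammer :: "nat \<Rightarrow> 'a::comm_ring_1 fps" where
  "odd_pochhammer n = (\<Prod>i<n. 1 - fps_X ^ (2 * i + 1))"

definition sq_dist :: "nat \<Rightarrow> nat \<Rightarrow> nat" where
  "sq_dist n k = nat ((int k - int n) ^ 2)"

lemma sum_two_mult_lessThan: "(\<Sum>j<n. 2 * j) = 2 * (n choose 2)"
  by (induction n) (simp_all add: numeral_2_eq_2)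

lemma prod_gauss_factors:
  "(\<Prod>j<2 * n. fps_X ^ (2 * n - 1) + (-1) * (fps_X ^ 2) ^ j :: 'a::comm_ring_1 fps)
     = (-1) ^ n * fps_X ^ (2 * (n choose 2) + n * (2 * n - 1)) * odd_pochhammer n ^ 2"
proof -
  define f :: "nat \<Rightarrow> 'a fps" where "f j = fps_X ^ (2 * n - 1) + (-1) * (fps_X ^ 2) ^ j" for j
  have low: "f j = (-1) * fps_X ^ (2 * j) * (1 - fps_X ^ (2 * (n - Suc j) + 1))" if "j < n" for j
  proof -
    from that have "2 * n - 1 = 2 * j + (2 * (n - Suc j) + 1)" by simp
    then have "fps_X ^ (2 * n - 1) = fps_X ^ (2 * j) * (fps_X ^ (2 * (n - Suc j) + 1) :: 'a fps)"
      by (metis power_add)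
    moreover have "(fps_X ^ 2) ^ j = (fps_X ^ (2 * j) :: 'a fps)" by (simp add: power_mult)
    ultimately show ?thesis unfolding f_def by (simp add: algebra_simps)
  qed
  have high: "f (i + n) = fps_X ^ (2 * n - 1) * (1 - fps_X ^ (2 * i + 1))" if "i < n" for i
  proof -
    from that have "2 * (i + n) = (2 * n - 1) + (2 * i + 1)" by simp
    then have "(fps_X ^ 2) ^ (i + n) = fps_X ^ (2 * n - 1) * (fps_X ^ (2 * i + 1) :: 'a fps)"
      by (metis power_add power_mult)
    then show ?thesis by (simp add: f_def algebra_simps)
  qed
  have "(\<Prod>j<n. f j) = (-1) ^ n * fps_X ^ (2 * (n choose 2)) * odd_pochhammer n"
  proof -
    have "(\<Prod>j<n. f j) = (\<Prod>j<n. (-1) * fps_X ^ (2 * j) * (1 - fps_X ^ (2 * (n - Suc j) + 1)))"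
      by (rule prod.cong) (simp_all add: low)
    also have "\<dots> = (\<Prod>j<n. (-1) * fps_X ^ (2 * j)) * (\<Prod>j<n. 1 - fps_X ^ (2 * (n - Suc j) + 1))"
      by (rule prod.distrib)
    also have "(\<Prod>j<n. (-1) * fps_X ^ (2 * j)) = (-1) ^ n * (fps_X ^ (\<Sum>j<n. 2 * j) :: 'a fps)"
      by (simp only: prod.distrib prod_constant power_sum card_lessThan)
    also have "(\<Prod>j<n. 1 - fps_X ^ (2 * (n - Suc j) + 1)) = (odd_pochhammer n :: 'a fps)"
      unfolding odd_pochhammer_def by (rule prod.nat_diff_reindex)
    finally show ?thesis by (simp only: sum_two_mult_lessThan)
  qed
  moreover have "(\<Prod>i<n. f (i + n)) = fps_X ^ (n * (2 * n - 1)) * odd_pochhammer n"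
    by (simp add: high prod.distrib odd_pochhammer_def mult.commute[of n] power_mult)
  moreover have "(\<Prod>j<2 * n. f j) = (\<Prod>j<n. f j) * (\<Prod>i<n. f (i + n))"
    using prod.atLeastLessThan_concat[of 0 n "2 * n" f] prod.shift_bounds_nat_ivl[of f 0 n n]
    by (simp add: atLeast0LessThan mult_2)
  ultimately show ?thesis
    by (simp add: f_def power_add power2_eq_square mult_ac)
qed

lemma gauss_exponent:
  assumes "1 \<le> n" "k \<le> 2 * n"
  shows "2 * (k choose 2) + (2 * n - 1) * (2 * n - k)
       = 2 * (n choose 2) + n * (2 * n - 1) + sq_dist n k"
proof -
  have ch: "int (2 * (j choose 2)) = int j * (int j - 1)" for j
    by (cases j) (simp_all add: choose_two algebra_simps)
  have d1: "int ((2 * n - 1) * (2 * n - k)) = (2 * int n - 1) * (2 * int n - int k)"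
    using assms by simp
  have d2: "int (n * (2 * n - 1)) = int n * (2 * int n - 1)"
    using assms by simp
  have d3: "int (sq_dist n k) = (int k - int n) ^ 2"
    by (simp add: sq_dist_def)
  have "int (2 * (k choose 2) + (2 * n - 1) * (2 * n - k))
      = int (2 * (n choose 2) + n * (2 * n - 1) + sq_dist n k)"
    by (simp only: of_nat_add ch d1 d2 d3) (simp add: power2_eq_square algebra_simps)
  then show ?thesis by (simp only: of_nat_eq_iff)
qed

lemma gauss_polynomial_identity:
  assumes "1 \<le> n"
  shows "(-1) ^ n * odd_pochhammer n ^ 2
       = (\<Sum>k\<le>2 * n. (-1) ^ k * q_binomial (fps_X ^ 2) (2 * n) k * fps_X ^ sq_dist n k
            :: 'a::comm_ring_1 fps)"
proof -
  define c where "c = 2 * (n choose 2) + n * (2 * n - 1)"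
  have "fps_X ^ c * ((-1) ^ n * odd_pochhammer n ^ 2)
      = (\<Prod>j<2 * n. fps_X ^ (2 * n - 1) + (-1) * (fps_X ^ 2) ^ j :: 'a fps)"
    by (subst prod_gauss_factors) (simp add: c_def mult_ac)
  also have "\<dots> = (\<Sum>k\<le>2 * n. q_binomial (fps_X ^ 2) (2 * n) k * (fps_X ^ 2) ^ (k choose 2)
                     * (fps_X ^ (2 * n - 1)) ^ (2 * n - k) * (-1) ^ k)"
    by (rule q_binomial_theorem)
  also have "\<dots> = fps_X ^ c
      * (\<Sum>k\<le>2 * n. (-1) ^ k * q_binomial (fps_X ^ 2) (2 * n) k * fps_X ^ sq_dist n k)"
    unfolding sum_distrib_left
  proof (rule sum.cong)
    fix k assume "k \<in> {..2 * n}"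
    then have e: "(fps_X ^ 2) ^ (k choose 2) * (fps_X ^ (2 * n - 1)) ^ (2 * n - k)
        = (fps_X ^ c * fps_X ^ sq_dist n k :: 'a fps)"
      using gauss_exponent[OF assms] by (simp add: c_def flip: power_mult power_add)
    have "q_binomial (fps_X ^ 2) (2 * n) k * (fps_X ^ 2) ^ (k choose 2)
        * (fps_X ^ (2 * n - 1)) ^ (2 * n - k) * (-1) ^ k
        = ((fps_X ^ 2) ^ (k choose 2) * (fps_X ^ (2 * n - 1)) ^ (2 * n - k))
          * ((-1) ^ k * q_binomial (fps_X ^ 2) (2 * n) k :: 'a fps)"
      by (simp only: ac_simps)
    also have "\<dots> = fps_X ^ c * ((-1) ^ k * q_binomial (fps_X ^ 2) (2 * n) k * fps_X ^ sq_dist n k)"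
      by (subst e) (simp only: ac_simps)
    finally show "q_binomial (fps_X ^ 2) (2 * n) k * (fps_X ^ 2) ^ (k choose 2)
        * (fps_X ^ (2 * n - 1)) ^ (2 * n - k) * (-1) ^ k
        = fps_X ^ c * ((-1) ^ k * q_binomial (fps_X ^ 2) (2 * n) k * fps_X ^ sq_dist n k :: 'a fps)" .
  qed simp
  finally show ?thesis by (rule fps_X_power_mult_cancel)
qed

definition euler_product :: "nat \<Rightarrow> 'a::comm_ring_1 fps" where
  "euler_product k = Abs_fps (\<lambda>n. q_pochhammer (fps_X ^ k) n $ n)"

definition phi_series :: "'a::comm_ring_1 fps" where
  "phi_series = Abs_fps (\<lambda>m. of_nat (card {n::int. n ^ 2 = int m}))"

lemma q_pochhammer_X_power_cong:
  assumes "j \<le> M"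
  shows "ring_cong (fps_X ^ ((j + 1) * k))
           (q_pochhammer (fps_X ^ k) M) (q_pochhammer (fps_X ^ k) j :: 'a::comm_ring_1 fps)"
  using assms
proof (induction M rule: dec_induct)
  case (step m)
  have "(j + 1) * k \<le> Suc m * k" using step.hyps by simp
  then have "fps_X ^ ((j + 1) * k) dvd (fps_X ^ (Suc m * k) :: 'a fps)" by (rule le_imp_power_dvd)
  then have "fps_X ^ ((j + 1) * k) dvd ((fps_X ^ k) ^ Suc m :: 'a fps)"
    by (simp only: mult.commute[of "Suc m"] power_mult)
  then have "ring_cong (fps_X ^ ((j + 1) * k))
      (q_pochhammer (fps_X ^ k) m * (1 - (fps_X ^ k) ^ Suc m)) (q_pochhammer (fps_X ^ k) j * 1 :: 'a fps)"
    by (intro ring_cong_mult step.IH ring_cong_one_minus)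
  then show ?case by (simp add: q_pochhammer_Suc)
qed simp

lemma euler_product_cong:
  assumes "1 \<le> k"
  shows "ring_cong (fps_X ^ ((n + 1) * k))
           (euler_product k) (q_pochhammer (fps_X ^ k) n :: 'a::comm_ring_1 fps)"
  unfolding ring_cong_fps_X_power_iff
proof (intro allI impI)
  fix i assume i: "i < (n + 1) * k"
  define a where "a = min i n"
  have "i < (a + 1) * k"
  proof (cases "i \<le> n")
    case True
    have "(i + 1) * 1 \<le> (i + 1) * k" using assms by (rule mult_le_mono2)
    with True show ?thesis by (simp add: a_def)
  qed (use i in \<open>simp add: a_def\<close>)
  moreover have "ring_cong (fps_X ^ ((a + 1) * k))
      (q_pochhammer (fps_X ^ k) M) (q_pochhammer (fps_X ^ k) a :: 'a fps)"
    if "M \<in> {i, n}" for M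
    using that by (intro q_pochhammer_X_power_cong) (auto simp: a_def)
  ultimately have "q_pochhammer (fps_X ^ k) i $ i = (q_pochhammer (fps_X ^ k) n :: 'a fps) $ i"
    unfolding ring_cong_fps_X_power_iff by simp
  then show "euler_product k $ i = (q_pochhammer (fps_X ^ k) n :: 'a fps) $ i"
    by (simp add: euler_product_def)
qed

lemma euler_product_nth_0 [simp]: "euler_product k $ 0 = 1"
  by (simp add: euler_product_def)

lemma euler_product_unit: "\<exists>v. euler_product k * v = (1 :: 'a::comm_ring_1 fps)"
  using fps_right_inverse[of "euler_product k" 1] by auto

lemma q_binomial_euler_product_cong:
  assumes "k \<le> N"
  shows "ring_cong (fps_X ^ (2 * min k (N - k) + 2))
           (q_binomial (fps_X ^ 2) N k * euler_product 2) (1 :: 'a::comm_ring_1 fps)"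
proof -
  define D where "D = 2 * min k (N - k) + 2"
  have E: "ring_cong (fps_X ^ D) (q_pochhammer (fps_X ^ 2) j) (euler_product 2 :: 'a fps)"
    if "min k (N - k) \<le> j" for j
  proof (rule ring_cong_sym, rule ring_cong_dvd)
    show "ring_cong (fps_X ^ ((j + 1) * 2)) (euler_product 2) (q_pochhammer (fps_X ^ 2) j :: 'a fps)"
      by (rule euler_product_cong) simp
    show "fps_X ^ D dvd (fps_X ^ ((j + 1) * 2) :: 'a fps)"
      using that by (intro le_imp_power_dvd) (simp add: D_def)
  qed
  have "ring_cong (fps_X ^ D) (q_binomial (fps_X ^ 2) N k * euler_product 2 * euler_product 2)
      (q_binomial (fps_X ^ 2) N k * q_pochhammer (fps_X ^ 2) k * q_pochhammer (fps_X ^ 2) (N - k)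
        :: 'a fps)"
    using ring_cong_sym[OF E[of k]] ring_cong_sym[OF E[of "N - k"]]
    by (intro ring_cong_mult ring_cong_refl) auto
  also have "\<dots> = q_pochhammer (fps_X ^ 2) N"
    using assms by (rule q_binomial_mult_q_pochhammer)
  also have "ring_cong (fps_X ^ D) \<dots> (1 * euler_product 2)"
    by (simp add: E)
  finally show ?thesis unfolding D_def
    using euler_product_unit[of 2] by (metis ring_cong_cancel)
qed

lemma sq_dist_bound:
  assumes "k \<le> 2 * n"
  shows "2 * n + 1 \<le> sq_dist n k + (2 * min k (2 * n - k) + 2)"
proof -
  define d where "d = int k - int n"
  have "int (min k (2 * n - k)) = int n - \<bar>d\<bar>"
    using assms by (auto simp: d_def min_def)
  moreover have "int (sq_dist n k) = \<bar>d\<bar> ^ 2"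
    by (simp add: sq_dist_def d_def)
  moreover have "0 \<le> (\<bar>d\<bar> - 1) ^ 2" by simp
  ultimately show ?thesis by (simp add: power2_eq_square algebra_simps)
qed

lemma gauss_sum_cong:
  assumes "1 \<le> n"
  shows "ring_cong (fps_X ^ (2 * n + 1))
           ((-1) ^ n * odd_pochhammer n ^ 2 * euler_product 2)
           (\<Sum>k\<le>2 * n. (-1) ^ k * fps_X ^ sq_dist n k :: 'a::comm_ring_1 fps)"
proof -
  have "(-1) ^ n * odd_pochhammer n ^ 2 * euler_product 2
      = (\<Sum>k\<le>2 * n. (-1) ^ k * (fps_X ^ sq_dist n k
            * (q_binomial (fps_X ^ 2) (2 * n) k * euler_product 2)) :: 'a fps)"
    by (simp only: gauss_polynomial_identity[OF assms] sum_distrib_right) (simp add: mult_ac)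
  also have "ring_cong (fps_X ^ (2 * n + 1)) \<dots> (\<Sum>k\<le>2 * n. (-1) ^ k * fps_X ^ sq_dist n k)"
  proof (intro ring_cong_sum ring_cong_mult[OF ring_cong_refl])
    fix k assume "k \<in> {..2 * n}"
    then have k: "k \<le> 2 * n" by simp
    show "ring_cong (fps_X ^ (2 * n + 1))
        (fps_X ^ sq_dist n k * (q_binomial (fps_X ^ 2) (2 * n) k * euler_product 2))
        (fps_X ^ sq_dist n k :: 'a fps)"
    proof -
      have "fps_X ^ (2 * n + 1) dvd
          (fps_X ^ (sq_dist n k + (2 * min k (2 * n - k) + 2)) :: 'a fps)"
        using sq_dist_bound[OF k] by (rule le_imp_power_dvd)
      then have dvd: "fps_X ^ (2 * n + 1) dvd
          (fps_X ^ sq_dist n k * fps_X ^ (2 * min k (2 * n - k) + 2) :: 'a fps)"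
        by (simp only: power_add)
      have "ring_cong (fps_X ^ sq_dist n k * fps_X ^ (2 * min k (2 * n - k) + 2))
          (fps_X ^ sq_dist n k * (q_binomial (fps_X ^ 2) (2 * n) k * euler_product 2))
          (fps_X ^ sq_dist n k * 1 :: 'a fps)"
        by (intro ring_cong_mult_left q_binomial_euler_product_cong k)
      from ring_cong_dvd[OF this dvd] show ?thesis by simp
    qed
  qed
  finally show ?thesis .
qed

lemma sq_dist_parity: "sq_dist n k = m \<Longrightarrow> even (k + n + m)"
proof -
  assume "sq_dist n k = m"
  then have "int m = (int k - int n) ^ 2" by (auto simp: sq_dist_def)
  then have sum: "int (k + n + m) = 2 * int n + (int k - int n) * (int k - int n + 1)"
    by (simp add: power2_eq_square algebra_simps)
  have "even ((int k - int n) * (int k - int n + 1))" by simp blast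
  then obtain j where "(int k - int n) * (int k - int n + 1) = 2 * j" by blast
  with sum have "int (k + n + m) = 2 * (int n + j)" by simp
  then show ?thesis by (metis dvd_triv_left even_of_nat_iff)
qed

lemma card_sq_dist_eq:
  assumes "m < 2 * n + 1"
  shows "card {k\<in>{..2 * n}. sq_dist n k = m} = card {i::int. i ^ 2 = int m}"
proof -
  define K where "K = {k\<in>{..2 * n}. sq_dist n k = m}"
  have "{i::int. i ^ 2 = int m} = (\<lambda>k. int k - int n) ` K"
  proof (intro equalityI subsetI)
    fix i :: int assume "i \<in> {i. i ^ 2 = int m}"
    then have i: "i ^ 2 = int m" by simp
    have "\<bar>i\<bar> \<le> int n"
    proof (rule ccontr)
      assume "\<not> \<bar>i\<bar> \<le> int n"
      then have "(int n + 1) ^ 2 \<le> \<bar>i\<bar> ^ 2" by (intro power_mono) simp_all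
      with i have "int n * int n + 2 * int n + 1 \<le> int m" by (simp add: power2_eq_square algebra_simps)
      moreover have "0 \<le> int n * int n" by simp
      ultimately show False using assms by linarith
    qed
    with i have "nat (i + int n) \<in> K" by (auto simp: K_def sq_dist_def)
    moreover from \<open>\<bar>i\<bar> \<le> int n\<close> have "i = int (nat (i + int n)) - int n" by simp
    ultimately show "i \<in> (\<lambda>k. int k - int n) ` K" by blast
  qed (auto simp: K_def sq_dist_def)
  moreover have "inj_on (\<lambda>k. int k - int n) K" by (rule inj_onI) simp
  ultimately show ?thesis by (simp add: K_def card_image)
qed

lemma sum_signs_sq_dist:
  assumes "m < 2 * n + 1"
  shows "(\<Sum>k\<le>2 * n. if sq_dist n k = m then (-1) ^ k else 0)
       = (-1) ^ (n + m) * (of_nat (card {i::int. i ^ 2 = int m}) :: 'a::comm_ring_1)"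
proof -
  define K where "K = {k\<in>{..2 * n}. sq_dist n k = m}"
  have "(\<Sum>k\<le>2 * n. if sq_dist n k = m then (-1) ^ k else 0) = (\<Sum>k\<in>K. (-1) ^ k :: 'a)"
    unfolding K_def by (rule sum.inter_filter[symmetric]) simp
  also have "\<dots> = (\<Sum>k\<in>K. (-1) ^ (n + m))"
  proof (rule sum.cong)
    fix k assume "k \<in> K"
    then have "even k = even (n + m)" using sq_dist_parity[of n k m] by (simp add: K_def) blast
    then show "((-1) ^ k :: 'a) = (-1) ^ (n + m)" by (simp add: minus_one_power_iff)
  qed simp
  also have "\<dots> = (-1) ^ (n + m) * of_nat (card {i::int. i ^ 2 = int m})"
    using card_sq_dist_eq[OF assms] by (simp add: K_def mult.commute)
  finally show ?thesis .
qed

lemma gauss_sum_eq_phi_cong: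
  "ring_cong (fps_X ^ (2 * n + 1))
     ((-1) ^ n * (\<Sum>k\<le>2 * n. (-1) ^ k * fps_X ^ sq_dist n k))
     (phi_series oo - fps_X :: 'a::comm_ring_1 fps)"
  unfolding ring_cong_fps_X_power_iff
proof (intro allI impI)
  fix m assume m: "m < 2 * n + 1"
  have "((-1) ^ n * (\<Sum>k\<le>2 * n. (-1) ^ k * fps_X ^ sq_dist n k) :: 'a fps) $ m
      = (-1) ^ n * (\<Sum>k\<le>2 * n. (-1) ^ k * (fps_X ^ sq_dist n k :: 'a fps) $ m)"
    by (simp only: fps_minus_one_power_mult_nth fps_sum_nth)
  also have "\<dots> = (-1) ^ n * (\<Sum>k\<le>2 * n. if sq_dist n k = m then (-1) ^ k else 0)"
    by (simp add: eq_commute[of m] if_distrib cong: if_cong)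
  also have "\<dots> = (-1) ^ n * ((-1) ^ (n + m) * of_nat (card {i::int. i ^ 2 = int m}))"
    by (simp only: sum_signs_sq_dist[OF m])
  also have "\<dots> = (-1) ^ m * of_nat (card {i::int. i ^ 2 = int m})"
    by (simp add: power_add minus_one_power_iff)
  finally show "((-1) ^ n * (\<Sum>k\<le>2 * n. (-1) ^ k * fps_X ^ sq_dist n k) :: 'a fps) $ m
      = (phi_series oo - fps_X :: 'a fps) $ m"
    by (simp add: fps_compose_uminus' phi_series_def)
qed

lemma q_pochhammer_X_double:
  "q_pochhammer fps_X (2 * n) = odd_pochhammer n * (q_pochhammer (fps_X ^ 2) n :: 'a::comm_ring_1 fps)"
proof (induction n)
  case (Suc n)
  have X2: "(fps_X ^ 2) ^ Suc n = (fps_X ^ Suc (Suc (2 * n)) :: 'a fps)"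
    by (simp only: power_mult[symmetric] mult_Suc_right add_2_eq_Suc)
  have "q_pochhammer fps_X (2 * Suc n)
      = q_pochhammer fps_X (2 * n) * (1 - fps_X ^ Suc (2 * n)) * (1 - fps_X ^ Suc (Suc (2 * n)) :: 'a fps)"
    by (simp only: mult_Suc_right q_pochhammer_Suc add_2_eq_Suc)
  also have "\<dots> = odd_pochhammer (Suc n) * q_pochhammer (fps_X ^ 2) (Suc n)"
    by (simp only: Suc.IH q_pochhammer_Suc X2) (simp add: odd_pochhammer_def mult_ac)
  finally show ?case .
qed (simp add: odd_pochhammer_def)

theorem gauss_identity:
  "euler_product 1 ^ 2 = (phi_series oo - fps_X) * (euler_product 2 :: 'a::comm_ring_1 fps)"
proof (rule fps_ext)
  fix i
  define n where "n = Suc i"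
  define D where "D = 2 * n + 1"
  have "ring_cong (fps_X ^ D) (euler_product 1) (q_pochhammer fps_X (2 * n) :: 'a fps)"
    using euler_product_cong[of 1 "2 * n"] by (simp add: D_def)
  also have "\<dots> = odd_pochhammer n * q_pochhammer (fps_X ^ 2) n"
    by (rule q_pochhammer_X_double)
  also have "ring_cong (fps_X ^ D) \<dots> (odd_pochhammer n * euler_product 2)"
  proof (rule ring_cong_mult[OF ring_cong_refl], rule ring_cong_sym, rule ring_cong_dvd)
    show "ring_cong (fps_X ^ ((n + 1) * 2)) (euler_product 2) (q_pochhammer (fps_X ^ 2) n :: 'a fps)"
      by (rule euler_product_cong) simp
    show "fps_X ^ D dvd (fps_X ^ ((n + 1) * 2) :: 'a fps)"
      by (rule le_imp_power_dvd) (simp add: D_def)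
  qed
  finally have "ring_cong (fps_X ^ D) (euler_product 1 ^ 2)
      ((odd_pochhammer n * euler_product 2) ^ 2 :: 'a fps)"
    by (rule ring_cong_power)
  also have "(odd_pochhammer n * euler_product 2) ^ 2
      = (-1) ^ n * ((-1) ^ n * odd_pochhammer n ^ 2 * euler_product 2) * (euler_product 2 :: 'a fps)"
    by (simp add: power2_eq_square algebra_simps minus_one_power_iff)
  also have "ring_cong (fps_X ^ D) \<dots>
      ((-1) ^ n * (\<Sum>k\<le>2 * n. (-1) ^ k * fps_X ^ sq_dist n k) * euler_product 2)"
    unfolding D_def by (intro ring_cong_mult ring_cong_refl gauss_sum_cong) (simp add: n_def)
  also have "ring_cong (fps_X ^ D) \<dots> ((phi_series oo - fps_X) * euler_product 2)"
    unfolding D_def by (intro ring_cong_mult ring_cong_refl gauss_sum_eq_phi_cong)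
  finally have "\<forall>k<D. (euler_product 1 ^ 2) $ k = ((phi_series oo - fps_X) * euler_product 2 :: 'a fps) $ k"
    by (simp only: ring_cong_fps_X_power_iff)
  then show "(euler_product 1 ^ 2) $ i = ((phi_series oo - fps_X) * euler_product 2 :: 'a fps) $ i"
    by (simp add: D_def n_def)
qed

section \<open>Reduction modulo 2 and modulo 64\<close>

lemma sum_mirror_products_cong:
  fixes a :: "nat \<Rightarrow> 'a::comm_ring_1"
  shows "ring_cong 2 (\<Sum>i = 0..m. a i * a (m - i)) (if even m then a (m div 2) ^ 2 else 0)"
proof -
  define g where "g i = a i * a (m - i)" for i
  define A where "A = {i\<in>{0..m}. 2 * i < m}"
  define B where "B = {i\<in>{0..m}. m < 2 * i}"
  define C where "C = {i\<in>{0..m}. 2 * i = m}"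
  have "{0..m} = A \<union> (B \<union> C)" by (auto simp: A_def B_def C_def)
  then have "(\<Sum>i = 0..m. g i) = sum g (A \<union> (B \<union> C))" by simp
  also have "\<dots> = sum g A + (sum g B + sum g C)"
    by (subst sum.union_disjoint; (subst sum.union_disjoint)?) (auto simp: A_def B_def C_def)
  finally have "(\<Sum>i = 0..m. g i) = sum g A + (sum g B + sum g C)" .
  moreover have "sum g B = sum g A"
    by (rule sum.reindex_bij_witness[of _ "\<lambda>i. m - i" "\<lambda>i. m - i"])
       (auto simp: A_def B_def g_def)
  moreover have "sum g C = (if even m then a (m div 2) ^ 2 else 0)"
  proof (cases "even m")
    case True
    then have "C = {m div 2}" by (auto simp: C_def)
    moreover from True have "m - m div 2 = m div 2" by presburger
    ultimately show ?thesis using True by (simp add: g_def power2_eq_square)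
  next
    case False
    then have "C = {}" by (auto simp: C_def)
    with False show ?thesis by simp
  qed
  ultimately have "(\<Sum>i = 0..m. g i) = 2 * sum g A + (if even m then a (m div 2) ^ 2 else 0)"
    by simp
  then show ?thesis by (simp add: ring_cong_def g_def)
qed

lemma fps_square_cong_compose_X2:
  fixes f :: "int fps"
  shows "ring_cong 2 (f ^ 2) (f oo fps_X ^ 2)"
  unfolding ring_cong_numeral_fps_iff
proof
  fix m
  have "ring_cong 2 ((f ^ 2) $ m) (if even m then (f $ (m div 2)) ^ 2 else 0)"
    using sum_mirror_products_cong[of "fps_nth f" m] by (simp add: power2_eq_square fps_mult_nth)
  also have "ring_cong 2 \<dots> (if even m then f $ (m div 2) else 0)"
    by (simp add: ring_cong_def power2_eq_square)
  also have "(if even m then f $ (m div 2) else 0) = (f oo fps_X ^ 2) $ m"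
    by (simp add: fps_compose_X_power_nth)
  finally show "2 dvd (f ^ 2) $ m - (f oo fps_X ^ 2) $ m"
    by (simp add: ring_cong_def)
qed

lemma ring_cong_compose_uminus_X: "ring_cong 2 (f oo - fps_X) (f :: int fps)"
  unfolding ring_cong_numeral_fps_iff
proof
  fix m
  have "even ((-1) ^ m - 1 :: int)" by (simp add: minus_one_power_iff)
  then have "even (((-1) ^ m - 1) * f $ m)" by simp
  then show "2 dvd (f oo - fps_X) $ m - f $ m"
    by (simp add: fps_compose_uminus' algebra_simps)
qed

lemma card_square_roots_even:
  assumes "0 < m"
  shows "even (card {i::int. i ^ 2 = int m})"
proof (cases "\<exists>i::int. i ^ 2 = int m")
  case True
  then obtain i :: int where i: "i ^ 2 = int m" by blast
  with assms have "i \<noteq> - i" by auto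
  moreover from i have "{j::int. j ^ 2 = int m} = {i, - i}"
    by (auto simp: power2_eq_iff simp flip: i)
  ultimately show ?thesis by simp
qed simp

lemma card_square_roots_0: "card {i::int. i ^ 2 = int 0} = 1"
proof -
  have "{i::int. i ^ 2 = int 0} = {0}" by auto
  then show ?thesis by simp
qed

lemma phi_series_odd_part: obtains s :: "int fps" where "phi_series = 1 + 2 * s"
proof
  show "phi_series = 1 + 2 * Abs_fps (\<lambda>m. (phi_series :: int fps) $ m div 2)"
  proof (rule fps_ext)
    fix m :: nat
    show "(phi_series :: int fps) $ m = (1 + 2 * Abs_fps (\<lambda>m. (phi_series :: int fps) $ m div 2)) $ m"
      using card_square_roots_even[of m]
      by (cases "m = 0") (auto simp: phi_series_def card_square_roots_0 numeral_fps_const)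
  qed
qed

lemma inverse_eighth_power_cong:
  fixes u x :: "'a::comm_ring_1"
  assumes "u * (1 + 2 * x) = 1"
  shows "ring_cong 64 (u ^ 8) (1 - 16 * x + 16 * x ^ 2 + 32 * x ^ 4)"
proof -
  define w where "w = 1 - 16 * x + 16 * x ^ 2 + 32 * x ^ 4"
  define P where "P = - 2 * x ^ 2 - 17 * x ^ 3 - 66 * x ^ 4 - 132 * x ^ 5 - 84 * x ^ 6
    + 240 * x ^ 7 + 756 * x ^ 8 + 1088 * x ^ 9 + 960 * x ^ 10 + 512 * x ^ 11 + 128 * x ^ 12"
  have "w * (1 + 2 * x) ^ 8 = 1 + 64 * P"
    unfolding w_def P_def by (simp add: algebra_simps eval_nat_numeral)
  then have "u ^ 8 = u ^ 8 * (w * (1 + 2 * x) ^ 8 - 64 * P)" by simp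
  also have "\<dots> = w * (u * (1 + 2 * x)) ^ 8 - 64 * P * u ^ 8"
    by (simp only: power_mult_distrib) (simp add: algebra_simps)
  also have "\<dots> = w - 64 * P * u ^ 8" by (simp add: assms)
  finally have "u ^ 8 - w = 64 * (- P * u ^ 8)" by (simp add: algebra_simps)
  then show ?thesis unfolding w_def ring_cong_def by (metis dvdI)
qed

lemma phi_series_congruence_mod_64:
  fixes u :: "int fps"
  assumes "u * (phi_series oo - fps_X) = 1"
  shows "ring_cong 64 (u ^ 8) (21 + 12 * (phi_series oo - fps_X) ^ 2
           + 16 * (phi_series oo fps_X ^ 2) + 16 * (phi_series oo fps_X ^ 4))"
proof -
  obtain s where s: "(phi_series :: int fps) = 1 + 2 * s" by (rule phi_series_odd_part)
  define x where "x = s oo - fps_X"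
  define y where "y = s oo fps_X ^ 2"
  define z where "z = s oo fps_X ^ 4"
  have T: "phi_series oo - fps_X = 1 + 2 * x"
    unfolding s x_def by (rule fps_compose_one_plus_two_mult) simp
  have Y: "phi_series oo fps_X ^ 2 = 1 + 2 * y"
    unfolding s y_def by (rule fps_compose_one_plus_two_mult) simp
  have Z: "phi_series oo fps_X ^ 4 = 1 + 2 * z"
    unfolding s z_def by (rule fps_compose_one_plus_two_mult) simp
  have xy: "ring_cong 2 (x ^ 2) y"
  proof -
    have "ring_cong 2 (x ^ 2) (s ^ 2)"
      unfolding x_def by (intro ring_cong_power ring_cong_compose_uminus_X)
    also have "ring_cong 2 (s ^ 2) y"
      unfolding y_def by (rule fps_square_cong_compose_X2)
    finally show ?thesis .
  qed
  have xz: "ring_cong 2 (x ^ 4) z"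
  proof -
    have "x ^ 4 = (x ^ 2) ^ 2" by (simp flip: power_mult)
    also have "ring_cong 2 \<dots> (y ^ 2)" using xy by (rule ring_cong_power)
    also have "ring_cong 2 (y ^ 2) (y oo fps_X ^ 2)" by (rule fps_square_cong_compose_X2)
    also have "y oo fps_X ^ 2 = s oo (fps_X ^ 2 oo fps_X ^ 2)"
      unfolding y_def by (simp add: fps_compose_assoc)
    also have "fps_X ^ 2 oo fps_X ^ 2 = (fps_X ^ 4 :: int fps)"
      by (simp add: fps_compose_power[symmetric] flip: power_mult)
    finally show ?thesis unfolding z_def .
  qed
  have "ring_cong 64 (u ^ 8) (1 - 16 * x + 16 * x ^ 2 + 32 * x ^ 4)"
    using assms unfolding T by (rule inverse_eighth_power_cong)
  also have "ring_cong 64 \<dots> (21 + 12 * (1 + 2 * x) ^ 2 + 16 * (1 + 2 * y) + 16 * (1 + 2 * z))"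
  proof -
    have "64 dvd 32 * x ^ 2 - 32 * y" "64 dvd 32 * x ^ 4 - 32 * z"
      using ring_cong_mult_left[OF xy, of 32] ring_cong_mult_left[OF xz, of 32]
      by (simp_all add: ring_cong_def)
    moreover have "1 - 16 * x + 16 * x ^ 2 + 32 * x ^ 4
        - (21 + 12 * (1 + 2 * x) ^ 2 + 16 * (1 + 2 * y) + 16 * (1 + 2 * z))
        = 64 * (- 1 - x - y) - (32 * x ^ 2 - 32 * y) + (32 * x ^ 4 - 32 * z)"
      by (simp add: power2_eq_square algebra_simps)
    ultimately show ?thesis unfolding ring_cong_def by (metis dvd_add dvd_diff dvd_triv_left)
  qed
  finally show ?thesis unfolding T Y Z .
qed

definition of_int_fps :: "int fps \<Rightarrow> 'a::comm_ring_1 fps" where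
  "of_int_fps f = Abs_fps (\<lambda>n. of_int (f $ n))"

lemma of_int_fps_nth [simp]: "of_int_fps f $ n = of_int (f $ n)"
  by (simp add: of_int_fps_def)

lemma of_int_fps_add [simp]: "of_int_fps (f + g) = of_int_fps f + of_int_fps g"
  and of_int_fps_uminus [simp]: "of_int_fps (- f) = - of_int_fps f"
  and of_int_fps_one [simp]: "of_int_fps 1 = 1"
  and of_int_fps_numeral [simp]: "of_int_fps (numeral k) = numeral k"
  and of_int_fps_X [simp]: "of_int_fps fps_X = fps_X"
  by (simp_all add: fps_eq_iff fps_numeral_nth fps_X_def)

lemma of_int_fps_mult [simp]: "of_int_fps (f * g) = of_int_fps f * of_int_fps g"
  by (rule fps_ext) (simp add: fps_mult_nth)

lemma of_int_fps_power [simp]: "of_int_fps (f ^ n) = of_int_fps f ^ n"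
  by (induction n) simp_all

lemma of_int_fps_compose [simp]: "of_int_fps (f oo g) = of_int_fps f oo of_int_fps g"
  by (rule fps_ext) (simp add: fps_compose_nth flip: of_int_fps_power)

lemma of_int_fps_phi_series [simp]: "of_int_fps phi_series = phi_series"
  by (rule fps_ext) (simp add: phi_series_def)

lemma ring_cong_of_int_fps_Ints:
  assumes "ring_cong (numeral k) f g"
  shows "of_int_fps f $ n \<in> \<int> \<and> of_int_fps g $ n \<in> \<int>
    \<and> (of_int_fps f $ n - of_int_fps g $ n) / numeral k \<in> (\<int> :: 'a::field_char_0 set)"
proof -
  obtain c where "f $ n - g $ n = numeral k * c"
    using assms by (auto simp: ring_cong_numeral_fps_iff elim: dvdE)
  then have "(of_int_fps f $ n - of_int_fps g $ n) / numeral k = (of_int c :: 'a)"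
    by (simp flip: of_int_diff)
  then show ?thesis by simp
qed

lemma eta_f_eq_euler_product: "eta_f k = euler_product k"
  by (simp add: eta_f_def euler_product_def q_pochhammer_def mult.commute flip: power_mult)

lemma ramanujan_phi_eq_phi_series: "ramanujan_phi = phi_series"
  by (simp add: ramanujan_phi_def phi_series_def)

lemma eta_quotient_eq_of_int_fps:
  fixes u :: "int fps"
  assumes "u * (phi_series oo - fps_X) = 1"
  shows "eta_f 2 ^ 8 / eta_f 1 ^ 16 = of_int_fps (u ^ 8)"
proof -
  have u: "of_int_fps u * (phi_series oo - fps_X) = (1 :: rat fps)"
    using arg_cong[OF assms, of of_int_fps] by simp
  have "of_int_fps (u ^ 8) * eta_f 1 ^ 16 = of_int_fps (u ^ 8) * (eta_f 1 ^ 2) ^ 8"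
    by (simp flip: power_mult)
  also have "\<dots> = (of_int_fps u * (phi_series oo - fps_X)) ^ 8 * eta_f 2 ^ 8"
    by (simp only: eta_f_eq_euler_product gauss_identity) (simp add: power_mult_distrib mult_ac)
  also have "\<dots> = eta_f 2 ^ 8"
    by (simp add: u)
  finally have "eta_f 2 ^ 8 = of_int_fps (u ^ 8) * eta_f 1 ^ 16" ..
  moreover have "(eta_f 1 ^ 16 :: rat fps) $ 0 = 1"
    by (simp add: eta_f_eq_euler_product fps_nth_power_0)
  ultimately show ?thesis by (metis nonzero_mult_div_cancel_right one_neq_zero fps_zero_nth)
qed

theorem mainTheorem7:
  fixes L R :: "rat fps"
  defines "L \<equiv> eta_f 2 ^ 8 / eta_f 1 ^ 16"
      and "R \<equiv> 21 + 12 * (ramanujan_phi oo (- fps_X)) ^ 2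
                 + 16 * (ramanujan_phi oo (fps_X ^ 2))
                 + 16 * (ramanujan_phi oo (fps_X ^ 4))"
  shows "\<forall>n. fps_nth L n \<in> \<int> \<and> fps_nth R n \<in> \<int> \<and> (fps_nth L n - fps_nth R n) / 64 \<in> \<int>"
proof
  fix n
  define T :: "int fps" where "T = phi_series oo - fps_X"
  have "T $ 0 = 1" by (simp add: T_def phi_series_def card_square_roots_0)
  then obtain u where u: "u * T = 1"
    using fps_right_inverse[of T 1] by (auto simp: mult.commute)
  have L: "L = of_int_fps (u ^ 8)"
    unfolding L_def using u unfolding T_def by (rule eta_quotient_eq_of_int_fps)
  have R: "R = of_int_fps (21 + 12 * T ^ 2
      + 16 * (phi_series oo fps_X ^ 2) + 16 * (phi_series oo fps_X ^ 4))"
    by (simp add: R_def T_def ramanujan_phi_eq_phi_series)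
  show "L $ n \<in> \<int> \<and> R $ n \<in> \<int> \<and> (L $ n - R $ n) / 64 \<in> \<int>"
    unfolding L R T_def
    by (rule ring_cong_of_int_fps_Ints, rule phi_series_congruence_mod_64) (use u in \<open>simp add: T_def\<close>)
qed

end
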